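(* Let $X=\{0,1\}$ and $c\geq1$. Let $\widetilde K_{1,01}(c)$ be the set of all $w\in X^c$ such that the sequence $(1,01,w)$ is not a code, and let $J_{1,01}(c)$ be the set of all words in $X^c$ that do not contain two consecutive $0$'s (i.e. do not contain $00$ as a factor). Then $\widetilde K_{1,01}(c)=J_{1,01}(c)$, and $|\widetilde K_{1,01}(c)|=F_{c+2}$, where $F_k$ is the $k$-th Fibonacci number ($F_0=0$, $F_1=1$, $F_k=F_{k-1}+F_{k-2}$).
   Context: A code over $X$ is a finite sequence $C=(v_1,\ldots,v_m)$ of words over $X$ such that every $w\in X^*$ has at most one factorization into code-words: if $w=v_{i_1}\cdots v_{i_l}=v_{j_1}\cdots v_{j_{l'}}$ with $l,l'\geq1$, then $l=l'$ and $i_t=j_t$ for all $t$. *)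

theory Defs
  imports Main "HOL-Number_Theory.Fib"
begin

text \<open>Words over X = {0,1} are represented as bool lists: False = 0, True = 1.
  A code is a finite sequence (list) of words C = [v_1,...,v_m] such that every word
  has at most one factorization into code words (index sequences of length >= 1).\<close>

definition is_code :: "'a list list \<Rightarrow> bool" where
  "is_code C \<longleftrightarrow>
     (\<forall>is js. is \<noteq> [] \<longrightarrow> js \<noteq> [] \<longrightarrow>
        set is \<subseteq> {..<length C} \<longrightarrow> set js \<subseteq> {..<length C} \<longrightarrow>
        concat (map (\<lambda>i. C ! i) is) = concat (map (\<lambda>i. C ! i) js) \<longrightarrow> is = js)"

definition zero :: bool where "zero = False"
definition one :: bool where "one = True"

definition Ktilde :: "nat \<Rightarrow> bool list set" where
  "Ktilde c = {w. length w = c \<and> \<not> is_code [[one], [zero, one], w]}"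

definition J :: "nat \<Rightarrow> bool list set" where
  "J c = {w. length w = c \<and> \<not> (\<exists>u v. w = u @ [zero, zero] @ v)}"

end

theory Submission
  imports Defs "HOL-Library.Sublist"
begin

text \<open>The words of \<open>{1, 01}\<^sup>*\<close> are exactly the words without factor \<open>00\<close> that do not end
  in \<open>0\<close>. If \<open>w\<close> has no factor \<open>00\<close>, then \<open>w\<close> or \<open>w1\<close> lies in \<open>{1, 01}\<^sup>*\<close>, and its factorization
  over \<open>{1, 01}\<close> competes with the one beginning with the code word \<open>w\<close>. Conversely, let \<open>w\<close>
  contain \<open>00\<close> and take two factorizations with different first code words. They cannot start
  with \<open>1\<close> and \<open>01\<close>, so one starts with \<open>w\<close> while the other starts with a nonempty
  \<open>p \<in> {1, 01}\<^sup>*\<close> followed by \<open>w\<close> (or by nothing). Then \<open>w\<close> is a prefix of \<open>p\<close> or of \<open>pw\<close>; in the second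
  case \<open>pw = ws\<close>, so \<open>w\<close> is a prefix of a power of \<open>p\<close>. Either way \<open>w\<close> is a factor of a
  word of \<open>{1, 01}\<^sup>*\<close>, which contains no \<open>00\<close>. Counting the words without \<open>00\<close> by their first
  letters gives the Fibonacci recursion.\<close>

lemma sublist_00_append:
  "sublist [False, False] (p @ q) \<longleftrightarrow>
     sublist [False, False] p \<or> sublist [False, False] q \<or> suffix [False] p \<and> prefix [False] q"
  by (auto simp: sublist_append append_eq_Cons_conv Cons_eq_append_conv)

lemma sublist_00_Cons:
  "sublist [False, False] (x # r) \<longleftrightarrow> \<not> x \<and> prefix [False] r \<or> sublist [False, False] r"
  by (auto simp: sublist_Cons_right prefix_Cons)

lemma J_conv_sublist: "J n = {w. length w = n \<and> \<not> sublist [False, False] w}"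
  by (auto simp: J_def sublist_def zero_def)

lemma finite_J: "finite (J n)"
  by (rule finite_subset[OF _ finite_lists_length_eq[of UNIV n]]) (auto simp: J_def)

lemma J_Suc_Suc: "J (Suc (Suc n)) = Cons True ` J (Suc n) \<union> (\<lambda>r. False # True # r) ` J n"
proof (intro equalityI subsetI)
  fix w assume "w \<in> J (Suc (Suc n))"
  then obtain x y r where "w = x # y # r" "length r = n" "\<not> sublist [False, False] w"
    by (auto simp: J_conv_sublist length_Suc_conv)
  then show "w \<in> Cons True ` J (Suc n) \<union> (\<lambda>r. False # True # r) ` J n"
    by (cases x; cases y) (auto simp: J_conv_sublist sublist_00_Cons prefix_Cons)
qed (auto simp: J_conv_sublist sublist_00_Cons prefix_Cons)

lemma card_J: "card (J n) = fib (n + 2)"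
proof (induction n rule: fib.induct)
  case 1
  have "J 0 = {[]}" by (auto simp: J_conv_sublist)
  then show ?case by simp
next
  case 2
  have "J 1 = {[True], [False]}" by (auto simp: J_conv_sublist length_Suc_conv sublist_00_Cons)
  then show ?case by (simp add: numeral_3_eq_3)
next
  case (3 n)
  have "card (J (Suc (Suc n))) = card (J (Suc n)) + card (J n)"
    unfolding J_Suc_Suc by (subst card_Un_disjoint) (auto simp: finite_J card_image inj_on_def)
  then show ?case using 3 by simp
qed

lemma concat_lists_1_01_iff:
  "v \<in> concat ` lists {[True], [False, True]} \<longleftrightarrow>
     \<not> sublist [False, False] v \<and> \<not> suffix [False] v"
proof
  assume "v \<in> concat ` lists {[True], [False, True]}"
  then obtain vs where vs: "vs \<in> lists {[True], [False, True]}" and "v = concat vs" by blast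
  from vs have "\<not> sublist [False, False] (concat vs) \<and> \<not> suffix [False] (concat vs)"
  proof (induction vs)
    case (Cons u vs)
    then have "u = [True] \<or> u = [False, True]"
      and "\<not> sublist [False, False] (concat vs) \<and> \<not> suffix [False] (concat vs)" by simp_all
    then show ?case by (elim disjE) (simp_all add: sublist_00_Cons suffix_Cons)
  qed simp
  with \<open>v = concat vs\<close> show "\<not> sublist [False, False] v \<and> \<not> suffix [False] v" by simp
next
  assume "\<not> sublist [False, False] v \<and> \<not> suffix [False] v"
  then show "v \<in> concat ` lists {[True], [False, True]}"
  proof (induction "length v" arbitrary: v rule: less_induct)
    case less
    show ?case
    proof (cases v)
      case Nil
      then show ?thesis by (intro image_eqI[of _ _ "[]"]) auto
    next
      case (Cons x r)
      show ?thesis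
      proof (cases x)
        case True
        then have "r \<in> concat ` lists {[True], [False, True]}"
          using less.prems Cons by (intro less.hyps) (auto simp: sublist_00_Cons suffix_Cons)
        then obtain rs where "rs \<in> lists {[True], [False, True]}" "r = concat rs" by blast
        then show ?thesis using Cons True by (intro image_eqI[of _ _ "[True] # rs"]) auto
      next
        case False
        then obtain r' where "r = True # r'"
          using less.prems Cons by (cases r) (auto simp: sublist_00_Cons suffix_Cons)
        then have "r' \<in> concat ` lists {[True], [False, True]}"
          using less.prems Cons by (intro less.hyps) (auto simp: sublist_00_Cons suffix_Cons)
        then obtain rs where "rs \<in> lists {[True], [False, True]}" "r' = concat rs" by blast
        then show ?thesis using Cons False \<open>r = True # r'\<close>
          by (intro image_eqI[of _ _ "[False, True] # rs"]) auto
      qed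
    qed
  qed
qed

lemma concat_replicate_in_concat_lists:
  "p \<in> concat ` lists A \<Longrightarrow> concat (replicate n p) \<in> concat ` lists A"
proof (induction n)
  case 0
  show ?case by (intro image_eqI[of _ _ "[]"]) auto
next
  case (Suc n)
  then obtain vs vs' where "vs \<in> lists A" "p = concat vs"
    "vs' \<in> lists A" "concat (replicate n p) = concat vs'" by blast
  then show ?case by (intro image_eqI[of _ _ "vs @ vs'"]) auto
qed

lemma prefix_concat_replicate_if_conjugate:
  assumes "p @ w = w @ s" "p \<noteq> []"
  shows "prefix w (concat (replicate (length w) p))"
proof -
  have prefix_power: "prefix w (concat (replicate n p) @ w)" for n
  proof (induction n)
    case (Suc n)
    then obtain t where t: "concat (replicate n p) @ w = w @ t" by (rule prefixE)
    have "concat (replicate (Suc n) p) @ w = p @ concat (replicate n p) @ w" by simp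
    also have "\<dots> = (p @ w) @ t" using t by simp
    also have "\<dots> = w @ s @ t" using assms(1) by simp
    finally show ?case by (rule prefixI)
  qed simp
  have "length (concat (replicate k p)) = k * length p" for k
    by (induction k) simp_all
  then have "length w \<le> length (concat (replicate (length w) p))"
    using assms(2) by (simp add: Suc_le_eq)
  with prefix_length_prefix[OF prefix_power[of "length w"]] show ?thesis
    by simp
qed

lemma concat_lists_1_01_eq_indices:
  "concat ` lists {[True], [False, True]} =
     (\<lambda>ks. concat (map ((!) [[True], [False, True], w]) ks)) ` lists {0, 1}"
proof -
  have "{[True], [False, True]} = (!) [[True], [False, True], w] ` {0, 1}" by simp
  then show ?thesis by (simp only: lists_image image_comp comp_def)
qed

lemma is_code_if_heads_differ:
  assumes nonempty: "[] \<notin> set C"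
    and heads: "\<And>i j is js. i \<noteq> j \<Longrightarrow> set (i # is) \<subseteq> {..<length C} \<Longrightarrow>
      set (j # js) \<subseteq> {..<length C} \<Longrightarrow>
      concat (map ((!) C) (i # is)) \<noteq> concat (map ((!) C) (j # js))"
  shows "is_code C"
  unfolding is_code_def
proof (intro allI impI)
  have empty: "ks = []" if "set ks \<subseteq> {..<length C}" "concat (map ((!) C) ks) = []" for ks
    using that nonempty by (cases ks) (auto dest: nth_mem)
  fix ks ls :: "nat list"
  assume "ks \<noteq> []" "ls \<noteq> []" "set ks \<subseteq> {..<length C}" "set ls \<subseteq> {..<length C}"
    "concat (map ((!) C) ks) = concat (map ((!) C) ls)"
  then show "ks = ls"
  proof (induction ks arbitrary: ls)
    case (Cons i ks)
    then obtain j ls' where ls: "ls = j # ls'" by (cases ls) auto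
    with Cons.prems heads have "i = j" by blast
    with Cons.prems ls have "concat (map ((!) C) ks) = concat (map ((!) C) ls')" by simp
    moreover have "ks = [] \<longleftrightarrow> ls' = []"
      using calculation empty[of ks] empty[of ls'] Cons.prems(3,4) ls by auto
    ultimately show ?case using Cons.IH Cons.prems(3,4) ls \<open>i = j\<close> by auto
  qed simp
qed

lemma not_prefix_concat_if_sublist_00:
  assumes "sublist [False, False] w" "set ks \<subseteq> {..<3}" "ks \<noteq> []" "hd ks \<noteq> 2"
  shows "\<not> prefix w (concat (map ((!) [[True], [False, True], w]) ks))"
proof
  let ?f = "(!) [[True], [False, True], w]"
  let ?star = "concat ` lists {[True], [False, True]}"
  define us where "us = takeWhile (\<lambda>i. i \<noteq> 2) ks"
  define rest where "rest = dropWhile (\<lambda>i. i \<noteq> 2) ks"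
  define p where "p = concat (map ?f us)"
  have "ks = us @ rest" unfolding us_def rest_def by simp
  moreover assume "prefix w (concat (map ?f ks))"
  ultimately have prefix_w: "prefix w (p @ concat (map ?f rest))"
    unfolding p_def by simp
  have "us \<in> lists {0, 1}"
    using assms(2) set_takeWhileD unfolding us_def by fastforce
  then have "p \<in> ?star"
    unfolding p_def concat_lists_1_01_eq_indices[of w] by blast
  have "us \<noteq> []" using assms(3,4) unfolding us_def by (cases ks) auto
  with \<open>us \<in> lists {0, 1}\<close> have "p \<noteq> []" unfolding p_def by (cases us) auto
  have no_00_star: "\<not> prefix w q" if "q \<in> ?star" for q
  proof
    assume "prefix w q"
    with assms(1) have "sublist [False, False] q"
      using prefix_imp_sublist sublist_order.order_trans by blast
    with that show False using concat_lists_1_01_iff by blast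
  qed
  show False
  proof (cases rest)
    case Nil
    with prefix_w no_00_star \<open>p \<in> ?star\<close> show False by simp
  next
    case (Cons r rs)
    then have "rest = 2 # rs" unfolding rest_def by (auto simp: dropWhile_eq_Cons_conv)
    with prefix_w have "prefix w ((p @ w) @ concat (map ?f rs))" by simp
    then have "prefix w (p @ w)" by (rule prefix_length_prefix) auto
    then obtain s where "p @ w = w @ s" by (auto simp: prefix_def)
    then have "prefix w (concat (replicate (length w) p))"
      using \<open>p \<noteq> []\<close> by (rule prefix_concat_replicate_if_conjugate)
    moreover have "concat (replicate (length w) p) \<in> ?star"
      using \<open>p \<in> ?star\<close> by (rule concat_replicate_in_concat_lists)
    ultimately show False using no_00_star by blast
  qed
qed

lemma is_code_1_01_if_sublist_00:
  assumes "sublist [False, False] w"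
  shows "is_code [[True], [False, True], w]"
proof (rule is_code_if_heads_differ)
  let ?f = "(!) [[True], [False, True], w]"
  show "[] \<notin> set [[True], [False, True], w]" using assms by auto
  have w_not_prefix: "w @ v \<noteq> concat (map ?f (k # ks))"
    if "k \<noteq> 2" "set (k # ks) \<subseteq> {..<3}" for k ks v
    using not_prefix_concat_if_sublist_00[OF assms that(2)] that(1)
    by (metis list.distinct(1) list.sel(1) prefixI)
  fix i j ks ls
  assume "i \<noteq> j" "set (i # ks) \<subseteq> {..<length [[True], [False, True], w]}"
    "set (j # ls) \<subseteq> {..<length [[True], [False, True], w]}"
  then have ij: "i \<noteq> j" "set (i # ks) \<subseteq> {..<3}" "set (j # ls) \<subseteq> {..<3}"
    by (simp_all add: numeral_3_eq_3)
  show "concat (map ?f (i # ks)) \<noteq> concat (map ?f (j # ls))"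
  proof (cases "i = 2 \<or> j = 2")
    case True
    then show ?thesis
    proof
      assume "i = 2"
      with ij w_not_prefix[of j ls "concat (map ?f ks)"] show ?thesis by simp
    next
      assume "j = 2"
      with ij w_not_prefix[of i ks "concat (map ?f ls)"] show ?thesis by auto
    qed
  next
    case False
    with ij have "i = 0 \<and> j = 1 \<or> i = 1 \<and> j = 0" by auto
    then show ?thesis by auto
  qed
qed

lemma not_is_code_1_01_if_not_sublist_00:
  assumes "\<not> sublist [False, False] w" "w \<noteq> []"
  shows "\<not> is_code [[True], [False, True], w]"
proof
  let ?f = "(!) [[True], [False, True], w]"
  assume code: "is_code [[True], [False, True], w]"
  \<comment> \<open>Appending \<open>1\<close> if necessary puts \<open>w\<close> into \<open>{1, 01}\<^sup>*\<close>.\<close>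
  define ts :: "nat list" where "ts = (if suffix [False] w then [0] else [])"
  have "w @ concat (map ?f ts) \<in> concat ` lists {[True], [False, True]}"
    using assms(1) unfolding concat_lists_1_01_iff ts_def
    by (auto simp: sublist_00_append sublist_00_Cons suffix_append suffix_Cons)
  then obtain ks where ks: "ks \<in> lists {0, 1}" "concat (map ?f ks) = w @ concat (map ?f ts)"
    unfolding concat_lists_1_01_eq_indices[of w] by (metis (no_types, lifting) imageE)
  with assms(2) have "ks \<noteq> []" by auto
  have "2 # ts = ks"
    using ks \<open>ks \<noteq> []\<close> by (intro code[unfolded is_code_def, rule_format]) (auto simp: ts_def)
  with ks show False by auto
qed

lemma is_code_1_01_iff:
  "w \<noteq> [] \<Longrightarrow> is_code [[True], [False, True], w] \<longleftrightarrow> sublist [False, False] w"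
  using is_code_1_01_if_sublist_00 not_is_code_1_01_if_not_sublist_00 by blast

theorem proposition4:
  fixes c :: nat
  assumes "c \<ge> 1"
  shows "Ktilde c = J c \<and> card (Ktilde c) = fib (c + 2)"
proof -
  have "is_code [[True], [False, True], w] \<longleftrightarrow> sublist [False, False] w" if "length w = c" for w
    using that assms by (intro is_code_1_01_iff) auto
  then have "Ktilde c = J c"
    unfolding Ktilde_def J_conv_sublist one_def zero_def by auto
  then show ?thesis using card_J by simp
qed

end
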